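(* Let $G$ be a claw-free graph and let $C$, $C_0$ be even holes of $G$. If $C$ is compatible with $C_0$, then $C$ is compatible with every even hole $C'\in\langle C_0\rangle$.
   Context: A hole is an induced cycle of length $\ge4$; even hole: even length. Claw-free: no induced $K_{1,3}$. Two even holes $C,C'$ are compatible iff $G[C\cup C']$ is a disconnected graph whose components are $G[C]$ and $G[C']$ (i.e., they are disjoint and no edge joins them). Single-vertex deformation: if $C$ is an even hole and $\mathbf{j}\notin C$ has $\Gamma_C(\mathbf{j})=\{\mathbf{u},\mathbf{k},\mathbf{v}\}$ with $\mathbf{u},\mathbf{v}$ the two neighbours of $\mathbf{k}$ in $C$, then $(C\setminus\{\mathbf{k}\})\cup\{\mathbf{j}\}$ is a single-vertex deformation of $C$. The deformation closure $\langle C_0\rangle$ is the smallest set of holes containing $C_0$ closed under single-vertex deformations. *)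

theory Defs
  imports Main
begin

definition graph :: "'a set \<Rightarrow> ('a \<Rightarrow> 'a \<Rightarrow> bool) \<Rightarrow> bool" where
  "graph V E \<longleftrightarrow> finite V \<and> (\<forall>x y. E x y \<longrightarrow> x \<in> V \<and> y \<in> V)
     \<and> (\<forall>x y. E x y \<longrightarrow> E y x) \<and> (\<forall>x. \<not> E x x)"

definition nbrs_in :: "('a \<Rightarrow> 'a \<Rightarrow> bool) \<Rightarrow> 'a set \<Rightarrow> 'a \<Rightarrow> 'a set" where
  "nbrs_in E S j = {x \<in> S. E j x}"

definition claw_free :: "'a set \<Rightarrow> ('a \<Rightarrow> 'a \<Rightarrow> bool) \<Rightarrow> bool" where
  "claw_free V E \<longleftrightarrow> \<not> (\<exists>c a b d. c \<in> V \<and> a \<in> V \<and> b \<in> V \<and> d \<in> V \<and>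
      E c a \<and> E c b \<and> E c d \<and> a \<noteq> b \<and> a \<noteq> d \<and> b \<noteq> d \<and>
      \<not> E a b \<and> \<not> E a d \<and> \<not> E b d)"

definition induced_connected :: "('a \<Rightarrow> 'a \<Rightarrow> bool) \<Rightarrow> 'a set \<Rightarrow> bool" where
  "induced_connected E S \<longleftrightarrow>
     (\<forall>x\<in>S. \<forall>y\<in>S. (\<lambda>u v. u \<in> S \<and> v \<in> S \<and> E u v)\<^sup>*\<^sup>* x y)"

text \<open>A hole: vertex set of an induced cycle of length at least 4, i.e. G[C] is a
  connected 2-regular graph on at least 4 vertices.\<close>
definition hole :: "'a set \<Rightarrow> ('a \<Rightarrow> 'a \<Rightarrow> bool) \<Rightarrow> 'a set \<Rightarrow> bool" where
  "hole V E C \<longleftrightarrow> C \<subseteq> V \<and> finite C \<and> card C \<ge> 4 \<and>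
     (\<forall>x\<in>C. card (nbrs_in E C x) = 2) \<and> induced_connected E C"

definition even_hole :: "'a set \<Rightarrow> ('a \<Rightarrow> 'a \<Rightarrow> bool) \<Rightarrow> 'a set \<Rightarrow> bool" where
  "even_hole V E C \<longleftrightarrow> hole V E C \<and> even (card C)"

definition compatible :: "('a \<Rightarrow> 'a \<Rightarrow> bool) \<Rightarrow> 'a set \<Rightarrow> 'a set \<Rightarrow> bool" where
  "compatible E C C' \<longleftrightarrow> C \<inter> C' = {} \<and> (\<forall>x\<in>C. \<forall>y\<in>C'. \<not> E x y)"

definition sv_deformation :: "'a set \<Rightarrow> ('a \<Rightarrow> 'a \<Rightarrow> bool) \<Rightarrow> 'a set \<Rightarrow> 'a set \<Rightarrow> bool" where
  "sv_deformation V E C D \<longleftrightarrow> even_hole V E C \<and>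
     (\<exists>j k u v. j \<in> V \<and> j \<notin> C \<and> k \<in> C \<and> nbrs_in E C k = {u, v} \<and> u \<noteq> v \<and>
        nbrs_in E C j = {u, k, v} \<and> D = (C - {k}) \<union> {j})"

inductive_set deformation_closure :: "'a set \<Rightarrow> ('a \<Rightarrow> 'a \<Rightarrow> bool) \<Rightarrow> 'a set \<Rightarrow> 'a set set"
  for V E C0 where
  base: "C0 \<in> deformation_closure V E C0"
| step: "C \<in> deformation_closure V E C0 \<Longrightarrow> sv_deformation V E C D \<Longrightarrow> hole V E D \<Longrightarrow>
          D \<in> deformation_closure V E C0"

end

theory Submission
  imports Defs
begin

text \<open>A single-vertex deformation replaces k by a vertex j whose neighbours on the hole C'
  are u, k, v. Since a hole has length at least 4, u and v are non-adjacent, so a neighbour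
  x of j in a set C anticomplete to C' would make j, u, v, x a claw. Hence every deformation
  of C' is again compatible with C, and induction over the deformation closure finishes.\<close>

lemma hole_nbrs_in_eq:
  assumes "hole V E D" "x \<in> D" "a \<in> nbrs_in E D x" "b \<in> nbrs_in E D x" "a \<noteq> b"
  shows "nbrs_in E D x = {a, b}"
proof -
  have "finite (nbrs_in E D x)" "card (nbrs_in E D x) = 2"
    using assms(1,2) unfolding hole_def nbrs_in_def by auto
  moreover have "card {a, b} = 2" using \<open>a \<noteq> b\<close> by simp
  moreover have "{a, b} \<subseteq> nbrs_in E D x" using assms(3,4) by simp
  ultimately show ?thesis by (metis card_subset_eq)
qed

lemma induced_connected_closed_subset:
  assumes "induced_connected E D" "k \<in> D" "k \<in> T"
    and closed: "\<And>y z. y \<in> T \<Longrightarrow> z \<in> nbrs_in E D y \<Longrightarrow> z \<in> T"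
  shows "D \<subseteq> T"
proof
  fix y assume "y \<in> D"
  then have "(\<lambda>a b. a \<in> D \<and> b \<in> D \<and> E a b)\<^sup>*\<^sup>* k y"
    using assms(1,2) unfolding induced_connected_def by blast
  then show "y \<in> T"
  proof (induction rule: rtranclp_induct)
    case base
    show ?case using \<open>k \<in> T\<close> .
  next
    case (step y z)
    then show ?case using closed unfolding nbrs_in_def by blast
  qed
qed

lemma hole_nbrs_not_adjacent:
  assumes hole: "hole V E D" and "k \<in> D" and nk: "nbrs_in E D k = {u, v}" and "u \<noteq> v"
    and sym: "\<And>x y. E x y \<Longrightarrow> E y x" and irrefl: "\<And>x. \<not> E x x"
  shows "\<not> E u v"
proof
  assume "E u v"
  have u: "u \<in> D" "E k u" and v: "v \<in> D" "E k v" using nk unfolding nbrs_in_def by blast+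
  have "k \<noteq> u" "k \<noteq> v" using u v irrefl by blast+
  have nu: "nbrs_in E D u = {k, v}"
    using hole_nbrs_in_eq[OF hole u(1)] \<open>E u v\<close> u v \<open>k \<in> D\<close> sym \<open>k \<noteq> v\<close>
    unfolding nbrs_in_def by blast
  have nv: "nbrs_in E D v = {k, u}"
    using hole_nbrs_in_eq[OF hole v(1)] \<open>E u v\<close> u v \<open>k \<in> D\<close> sym \<open>k \<noteq> u\<close>
    unfolding nbrs_in_def by blast
  have "D \<subseteq> {u, v, k}"
    using hole \<open>k \<in> D\<close> nk nu nv unfolding hole_def
    by (intro induced_connected_closed_subset[of E D k]) auto
  then have "card D \<le> card {u, v, k}" by (simp add: card_mono)
  also have "\<dots> \<le> 3" by (simp add: card_insert_if)
  finally show False using hole unfolding hole_def by simp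
qed

lemma claw_free_no_nbr_anticomplete:
  assumes "graph V E" "claw_free V E"
    and "E j u" "E j v" "u \<noteq> v" "\<not> E u v"
    and "x \<noteq> u" "x \<noteq> v" "\<not> E x u" "\<not> E x v"
  shows "\<not> E j x"
proof
  assume "E j x"
  have "j \<in> V" "u \<in> V" "v \<in> V" "x \<in> V" and "\<not> E u x" "\<not> E v x"
    using assms \<open>E j x\<close> unfolding graph_def by blast+
  then show False
    using assms(2-8) \<open>E j x\<close> unfolding claw_free_def by blast
qed

lemma compatible_sv_deformation:
  assumes g: "graph V E" and cf: "claw_free V E"
    and comp: "compatible E C C'" and sv: "sv_deformation V E C' D"
  shows "compatible E C D"
proof -
  obtain j k u v where "k \<in> C'" and nk: "nbrs_in E C' k = {u, v}" and "u \<noteq> v"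
    and nj: "nbrs_in E C' j = {u, k, v}" and D: "D = (C' - {k}) \<union> {j}"
    and hole: "hole V E C'"
    using sv unfolding sv_deformation_def even_hole_def by blast
  have sym: "\<And>x y. E x y \<Longrightarrow> E y x" and irrefl: "\<And>x. \<not> E x x"
    using g unfolding graph_def by blast+
  have "\<not> E u v" using hole_nbrs_not_adjacent[OF hole \<open>k \<in> C'\<close> nk \<open>u \<noteq> v\<close> sym irrefl] .
  have "u \<in> C'" "v \<in> C'" "E j u" "E j v" using nk nj unfolding nbrs_in_def by auto
  have "\<not> E j x" if "x \<in> C" for x
  proof (rule claw_free_no_nbr_anticomplete[OF g cf \<open>E j u\<close> \<open>E j v\<close> \<open>u \<noteq> v\<close> \<open>\<not> E u v\<close>])
    show "x \<noteq> u" "x \<noteq> v" "\<not> E x u" "\<not> E x v"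
      using comp that \<open>u \<in> C'\<close> \<open>v \<in> C'\<close> unfolding compatible_def by auto
  qed
  moreover have "j \<notin> C" using comp \<open>E j u\<close> \<open>u \<in> C'\<close> sym unfolding compatible_def by blast
  ultimately show ?thesis using comp sym unfolding compatible_def D by blast
qed

lemma compatible_deformation_closure:
  assumes "graph V E" "claw_free V E" "compatible E C C0"
    and "C' \<in> deformation_closure V E C0"
  shows "compatible E C C'"
  using assms(4)
proof (induction rule: deformation_closure.induct)
  case base
  show ?case using assms(3) .
next
  case (step C1 D)
  then show ?case using compatible_sv_deformation assms(1,2) by blast
qed

theorem corollary5:
  fixes V :: "'a set" and E :: "'a \<Rightarrow> 'a \<Rightarrow> bool" and C C0 :: "'a set"
  assumes "graph V E"
    and "claw_free V E"
    and "even_hole V E C"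
    and "even_hole V E C0"
    and "compatible E C C0"
  shows "\<forall>C' \<in> deformation_closure V E C0. even_hole V E C' \<longrightarrow> compatible E C C'"
  using compatible_deformation_closure[OF assms(1,2,5)] by blast

end
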